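(* Let $\mathcal N$ be a finite network and let $\mathcal I=\mathcal N.\omega$ be the outcome of a run of the reduction process $\omega$. Let $y$ be a node of $\mathcal I$ that is not isolated in $\mathcal I$. Then either (1) there is a chordless cycle $C$ in $\mathcal I$ of length $k\ge 4$ with $y\in C$, or (2) there are chordless cycles $C_1,C_2$ in $\mathcal I$, each of length at least $4$, and nodes $x\in C_1$, $z\in C_2$ such that $y$ lies on a path in $\mathcal I$ from $x$ to $z$.
   Context: A network $\mathcal N=(N,E)$ is a finite simple undirected graph. For a graph $G$ and a set $Y$ of its nodes, the neighborhood is $Y.\eta=\{z\notin Y:\exists y\in Y,\ (y,z)\text{ an edge of }G\}$, the region is $Y.\rho=Y\cup Y.\eta$, and the neighborhood closure is $Y.\varphi=\{z\in Y.\rho:\{z\}.\rho\subseteq Y.\rho\}$ (all computed in $G$). A node $z$ is subsumed by a node $y\neq z$ in $G$ if $\{z\}.\varphi\subseteq\{y\}.\varphi$; equivalently, $z\in\{y\}.\eta$ and $\{z\}.\eta\subseteq\{y\}.\rho$. The reduction process $\omega$: set $G_0=\mathcal N$; as long as the current graph $G_i$ (an induced subgraph of $\mathcal N$) contains distinct nodes $y,z$ with $z$ subsumed by $y$ in $G_i$, choose such a pair and let $G_{i+1}$ be obtained from $G_i$ by deleting $z$ and its incident edges; when no such pair exists, stop. The final graph is denoted $\mathcal N.\omega$. A cycle $\langle y_1,\dots,y_k,y_1\rangle$ is a closed simple path of length $k$; a chord is an edge $(y_i,y_j)$ between two nodes of the cycle that are not consecutive on it; a cycle is chordless if it has no chord.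 *)

theory Defs
  imports Main
begin

text \<open>Every graph occurring in the reduction process is an induced subgraph of the network,
hence is determined by its node set V \<subseteq> N; edges of it are the E-edges between nodes of V.\<close>

definition network :: "'a set \<Rightarrow> ('a \<times> 'a) set \<Rightarrow> bool" where
  "network N E \<longleftrightarrow> finite N \<and> E \<subseteq> N \<times> N \<and> sym E \<and> irrefl E"

definition nbhd :: "('a \<times> 'a) set \<Rightarrow> 'a set \<Rightarrow> 'a set \<Rightarrow> 'a set" where
  "nbhd E V Y = {z \<in> V. z \<notin> Y \<and> (\<exists>y\<in>Y. (y, z) \<in> E)}"

definition region :: "('a \<times> 'a) set \<Rightarrow> 'a set \<Rightarrow> 'a set \<Rightarrow> 'a set" where
  "region E V Y = Y \<union> nbhd E V Y"

definition nclosure :: "('a \<times> 'a) set \<Rightarrow> 'a set \<Rightarrow> 'a set \<Rightarrow> 'a set" where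
  "nclosure E V Y = {z \<in> region E V Y. region E V {z} \<subseteq> region E V Y}"

definition subsumed :: "('a \<times> 'a) set \<Rightarrow> 'a set \<Rightarrow> 'a \<Rightarrow> 'a \<Rightarrow> bool" where
  "subsumed E V z y \<longleftrightarrow> z \<in> V \<and> y \<in> V \<and> z \<noteq> y \<and> nclosure E V {z} \<subseteq> nclosure E V {y}"

definition reduce_step :: "('a \<times> 'a) set \<Rightarrow> 'a set \<Rightarrow> 'a set \<Rightarrow> bool" where
  "reduce_step E V V' \<longleftrightarrow> (\<exists>y z. subsumed E V z y \<and> V' = V - {z})"

definition omega_outcome :: "'a set \<Rightarrow> ('a \<times> 'a) set \<Rightarrow> 'a set \<Rightarrow> bool" where
  "omega_outcome N E I \<longleftrightarrow> (reduce_step E)\<^sup>*\<^sup>* N I \<and> \<not> (\<exists>y z. subsumed E I z y)"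

definition is_cycle :: "('a \<times> 'a) set \<Rightarrow> 'a set \<Rightarrow> 'a list \<Rightarrow> bool" where
  "is_cycle E V cs \<longleftrightarrow> length cs \<ge> 3 \<and> distinct cs \<and> set cs \<subseteq> V \<and>
     (\<forall>i < length cs. (cs ! i, cs ! ((i + 1) mod length cs)) \<in> E)"

definition chordless_cycle :: "('a \<times> 'a) set \<Rightarrow> 'a set \<Rightarrow> 'a list \<Rightarrow> bool" where
  "chordless_cycle E V cs \<longleftrightarrow> is_cycle E V cs \<and>
     (\<forall>i < length cs. \<forall>j < length cs.
        i \<noteq> j \<and> j \<noteq> (i + 1) mod length cs \<and> i \<noteq> (j + 1) mod length cs
        \<longrightarrow> (cs ! i, cs ! j) \<notin> E)"

definition is_path :: "('a \<times> 'a) set \<Rightarrow> 'a set \<Rightarrow> 'a list \<Rightarrow> 'a \<Rightarrow> 'a \<Rightarrow> bool" where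
  "is_path E V ps x z \<longleftrightarrow> ps \<noteq> [] \<and> hd ps = x \<and> last ps = z \<and> distinct ps \<and>
     set ps \<subseteq> V \<and> (\<forall>i. Suc i < length ps \<longrightarrow> (ps ! i, ps ! Suc i) \<in> E)"

end

theory Submission
  imports Defs
begin

text \<open>Take a longest induced path P through y; it has at least one edge since y is not
isolated. Let a, b be its last two nodes. As b is not subsumed by a, b has a neighbour r
with r \<noteq> a and r not adjacent to a, and r lies off P. If b were the only neighbour of r
on P, then P followed by r would be a longer induced path through y. Hence r has a
neighbour on P before a; closing the part of P from the last such neighbour onwards
through r gives a chordless cycle of length at least 4 containing b. Doing the same at
the other end of P exhibits P as a path through y between two such cycles.\<close>

definition induced_path :: "('a \<times> 'a) set \<Rightarrow> 'a set \<Rightarrow> 'a list \<Rightarrow> bool" where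
  "induced_path E V ps \<longleftrightarrow> distinct ps \<and> set ps \<subseteq> V \<and>
     (\<forall>i<length ps. \<forall>j<length ps. (ps!i, ps!j) \<in> E \<longleftrightarrow> (j = Suc i \<or> i = Suc j))"

lemma induced_pathD:
  assumes "induced_path E V ps"
  shows "distinct ps" "set ps \<subseteq> V"
    and "\<And>i j. i < length ps \<Longrightarrow> j < length ps \<Longrightarrow> (ps!i, ps!j) \<in> E \<longleftrightarrow> (j = Suc i \<or> i = Suc j)"
  using assms unfolding induced_path_def by auto

lemma induced_path_rev:
  assumes "induced_path E V ps"
  shows "induced_path E V (rev ps)"
proof -
  have "(rev ps ! i, rev ps ! j) \<in> E \<longleftrightarrow> (j = Suc i \<or> i = Suc j)"
    if "i < length ps" "j < length ps" for i j
    using that induced_pathD(3)[OF assms, of "length ps - Suc i" "length ps - Suc j"]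
    by (auto simp: rev_nth)
  then show ?thesis
    using induced_pathD(1,2)[OF assms] unfolding induced_path_def by simp
qed

lemma induced_path_drop:
  assumes "induced_path E V ps"
  shows "induced_path E V (drop k ps)"
proof -
  have "(drop k ps ! i, drop k ps ! j) \<in> E \<longleftrightarrow> (j = Suc i \<or> i = Suc j)"
    if "i < length (drop k ps)" "j < length (drop k ps)" for i j
    using that induced_pathD(3)[OF assms, of "k + i" "k + j"] by auto
  then show ?thesis
    using induced_pathD(1,2)[OF assms] unfolding induced_path_def
    by (auto dest: in_set_dropD)
qed

lemma induced_path_is_path:
  assumes "induced_path E V ps" "ps \<noteq> []"
  shows "is_path E V ps (hd ps) (last ps)"
  using assms unfolding induced_path_def is_path_def by simp

lemma induced_path_snoc:
  assumes "sym E" "irrefl E" and P: "induced_path E V P" and "r \<in> V" "r \<notin> set P"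
    and adj: "\<And>j. j < length P \<Longrightarrow> (r, P!j) \<in> E \<longleftrightarrow> Suc j = length P"
  shows "induced_path E V (P @ [r])"
proof -
  have adj': "(P!j, r) \<in> E \<longleftrightarrow> Suc j = length P" if "j < length P" for j
    using adj[OF that] \<open>sym E\<close> by (auto dest: symD)
  have "((P @ [r]) ! i, (P @ [r]) ! j) \<in> E \<longleftrightarrow> (j = Suc i \<or> i = Suc j)"
    if "i < Suc (length P)" "j < Suc (length P)" for i j
    using that induced_pathD(3)[OF P, of i j] adj[of j] adj'[of i] irreflD[OF \<open>irrefl E\<close>, of r]
    by (auto simp: nth_append less_Suc_eq)
  then show ?thesis
    using induced_pathD(1,2)[OF P] assms(4,5) unfolding induced_path_def by simp
qed

lemma induced_path_edge:
  assumes "sym E" "irrefl E" "x \<in> V" "z \<in> V" "(x, z) \<in> E"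
  shows "induced_path E V [x, z]"
proof -
  have "induced_path E V [x]"
    using assms(3) irreflD[OF \<open>irrefl E\<close>] unfolding induced_path_def by simp
  then have "induced_path E V ([x] @ [z])"
    by (rule induced_path_snoc[OF assms(1,2) _ assms(4)])
      (use assms irreflD[OF \<open>irrefl E\<close>] in \<open>auto dest: symD\<close>)
  then show ?thesis by simp
qed

lemma induced_path_length_le_card:
  assumes "finite V" "induced_path E V Q"
  shows "length Q \<le> card V"
  using card_mono[OF assms(1)] distinct_card[of Q] assms(2) unfolding induced_path_def by metis

lemma ex_longest_induced_path:
  assumes "finite V" "induced_path E V Q" "y \<in> set Q"
  obtains P where "induced_path E V P" "y \<in> set P"
    "\<And>Q. induced_path E V Q \<Longrightarrow> y \<in> set Q \<Longrightarrow> length Q \<le> length P"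
proof -
  have "\<forall>Q. induced_path E V Q \<and> y \<in> set Q \<longrightarrow> length Q < Suc (card V)"
    using induced_path_length_le_card[OF assms(1)] le_imp_less_Suc by blast
  then obtain P where "induced_path E V P \<and> y \<in> set P"
    "\<forall>Q. induced_path E V Q \<and> y \<in> set Q \<longrightarrow> length Q \<le> length P"
    using ex_has_greatest_nat[of "\<lambda>Q. induced_path E V Q \<and> y \<in> set Q" Q length] assms(2,3)
    by blast
  then show thesis using that by blast
qed

lemma chordless_cycle_snoc:
  assumes "sym E" and Q: "induced_path E V Q" and "length Q \<ge> 3" "r \<in> V" "r \<notin> set Q"
    and adj: "\<And>j. j < length Q \<Longrightarrow> (r, Q!j) \<in> E \<longleftrightarrow> j = 0 \<or> Suc j = length Q"
  shows "chordless_cycle E V (Q @ [r])"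
proof -
  define n where "n = length Q"
  have adj': "(Q!j, r) \<in> E \<longleftrightarrow> j = 0 \<or> Suc j = n" if "j < n" for j
    using adj that \<open>sym E\<close> unfolding n_def by (auto dest: symD)
  have nth: "(Q @ [r]) ! t = (if t < n then Q ! t else r)" if "t < Suc n" for t
    using that by (simp add: nth_append n_def)
  have succ: "(t + 1) mod Suc n = (if t = n then 0 else Suc t)" if "t < Suc n" for t
    using that by auto
  have "is_cycle E V (Q @ [r])"
    unfolding is_cycle_def
  proof (intro conjI allI impI)
    fix t assume "t < length (Q @ [r])"
    then show "((Q @ [r]) ! t, (Q @ [r]) ! ((t + 1) mod length (Q @ [r]))) \<in> E"
      using nth succ adj[of 0] adj'[of t] induced_pathD(3)[OF Q, of t "Suc t"] \<open>length Q \<ge> 3\<close>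
      by (auto simp: n_def less_Suc_eq)
  qed (use assms induced_pathD(1,2)[OF Q] in auto)
  moreover have "((Q @ [r]) ! i, (Q @ [r]) ! j) \<notin> E"
    if "i < Suc n" "j < Suc n" "i \<noteq> j" "j \<noteq> (i + 1) mod Suc n" "i \<noteq> (j + 1) mod Suc n" for i j
    using that nth succ adj[of j] adj'[of i] induced_pathD(3)[OF Q, of i j] \<open>length Q \<ge> 3\<close>
    by (auto simp: n_def less_Suc_eq split: if_splits)
  ultimately show ?thesis
    unfolding chordless_cycle_def by (simp add: n_def)
qed

lemma chordless_cycle_drop_snoc:
  assumes "sym E" and P: "induced_path E V P" and "r \<in> V" "r \<notin> set P"
    and "i + 2 < length P" "(r, P!i) \<in> E" "(r, last P) \<in> E"
    and between: "\<And>j. i < j \<Longrightarrow> Suc j < length P \<Longrightarrow> (r, P!j) \<notin> E"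
  shows "chordless_cycle E V (drop i P @ [r])"
proof (rule chordless_cycle_snoc)
  show "induced_path E V (drop i P)" using induced_path_drop[OF P] .
  show "r \<notin> set (drop i P)" using \<open>r \<notin> set P\<close> by (auto dest: in_set_dropD)
  have "last P = P ! (length P - 1)"
    by (rule last_conv_nth) (use \<open>i + 2 < length P\<close> in auto)
  fix j assume j: "j < length (drop i P)"
  consider "j = 0" | "Suc j = length (drop i P)" | "0 < j" "Suc (i + j) < length P"
    using j by fastforce
  then show "(r, drop i P ! j) \<in> E \<longleftrightarrow> j = 0 \<or> Suc j = length (drop i P)"
  proof cases
    case 2
    then have "i + j = length P - 1" by simp
    then show ?thesis using 2 j assms(7) \<open>last P = P ! (length P - 1)\<close> by simp
  qed (use j assms(6) between[of "i + j"] in auto)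
qed (use assms in auto)

lemma not_subsumed_obtains_private_neighbour:
  assumes "z \<in> V" "w \<in> V" "z \<noteq> w" "(w, z) \<in> E" "\<not> subsumed E V z w"
  obtains r where "r \<in> V" "(z, r) \<in> E" "r \<noteq> w" "(w, r) \<notin> E"
proof -
  have "region E V {z} \<subseteq> region E V {w}" if "\<not> thesis"
    using that assms(1-4) \<open>\<And>r. \<lbrakk>r \<in> V; (z, r) \<in> E; r \<noteq> w; (w, r) \<notin> E\<rbrakk> \<Longrightarrow> thesis\<close>
    unfolding region_def nbhd_def by blast
  then have "nclosure E V {z} \<subseteq> nclosure E V {w}" if "\<not> thesis"
    using that unfolding nclosure_def by blast
  then show thesis
    using assms unfolding subsumed_def by blast
qed

lemma induced_path_last_private_neighbour:
  assumes "sym E" "irrefl E" and irreducible: "\<nexists>y z. subsumed E I z y"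
    and P: "induced_path E I P" "length P \<ge> 2"
  obtains r where "r \<in> I" "r \<notin> set P" "(r, last P) \<in> E" "(r, P ! (length P - 2)) \<notin> E"
proof -
  define a where "a = P ! (length P - 2)"
  have last: "last P = P ! (length P - 1)"
    by (rule last_conv_nth) (use P(2) in auto)
  have adj_last: "(P!j, last P) \<in> E \<longleftrightarrow> j = length P - 2" if "j < length P" for j
    using that P(2) induced_pathD(3)[OF P(1), of j "length P - 1"] unfolding last by auto
  have "(a, last P) \<in> E"
    using P(2) adj_last[of "length P - 2"] unfolding a_def by simp
  moreover have "a \<in> I" "last P \<in> I"
    using P induced_pathD(2)[OF P(1)] unfolding a_def last by auto
  moreover have "a \<noteq> last P"
    using \<open>(a, last P) \<in> E\<close> irreflD[OF \<open>irrefl E\<close>] by auto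
  ultimately obtain r where r: "r \<in> I" "(last P, r) \<in> E" "r \<noteq> a" "(a, r) \<notin> E"
    using not_subsumed_obtains_private_neighbour irreducible by metis
  have "r \<notin> set P"
  proof
    assume "r \<in> set P"
    then obtain j where "j < length P" "P ! j = r" by (auto simp: in_set_conv_nth)
    then show False
      using adj_last[of j] r(2-3) \<open>sym E\<close> unfolding a_def by (auto dest: symD)
  qed
  then show thesis
    using that r \<open>sym E\<close> unfolding a_def by (auto dest: symD)
qed

lemma longest_induced_path_last_on_chordless_cycle:
  assumes "sym E" "irrefl E" and irreducible: "\<nexists>y z. subsumed E I z y"
    and P: "induced_path E I P" "length P \<ge> 2" "y \<in> set P"
    and longest: "\<And>Q. induced_path E I Q \<Longrightarrow> y \<in> set Q \<Longrightarrow> length Q \<le> length P"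
  obtains C where "chordless_cycle E I C" "length C \<ge> 4" "last P \<in> set C"
proof -
  obtain r where r: "r \<in> I" "r \<notin> set P" "(r, last P) \<in> E" "(r, P ! (length P - 2)) \<notin> E"
    using induced_path_last_private_neighbour[OF assms(1-3) P(1,2)] .
  have last: "last P = P ! (length P - 1)"
    by (rule last_conv_nth) (use P(2) in auto)
  define S where "S = {i. i + 2 < length P \<and> (r, P!i) \<in> E}"
  have "S \<noteq> {}"
  proof
    assume "S = {}"
    have "(r, P!j) \<in> E \<longleftrightarrow> Suc j = length P" if "j < length P" for j
    proof -
      consider "j = length P - 1" | "j = length P - 2" | "j + 2 < length P"
        using \<open>j < length P\<close> by linarith
      then show ?thesis
        using \<open>S = {}\<close> r(3,4) P(2) unfolding S_def last by cases auto
    qed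
    then have "induced_path E I (P @ [r])"
      using induced_path_snoc[OF assms(1,2) P(1) r(1,2)] by blast
    then show False
      using longest[of "P @ [r]"] P(3) by simp
  qed
  define i where "i = Max S"
  have "finite S"
    by (rule finite_subset[of _ "{..<length P}"]) (auto simp: S_def)
  then have "i \<in> S" and i_max: "\<And>j. j \<in> S \<Longrightarrow> j \<le> i"
    using \<open>S \<noteq> {}\<close> unfolding i_def by auto
  have "chordless_cycle E I (drop i P @ [r])"
  proof (rule chordless_cycle_drop_snoc[OF assms(1) P(1) r(1,2)])
    fix j assume "i < j" "Suc j < length P"
    then consider "j = length P - 2" | "j + 2 < length P" by linarith
    then show "(r, P!j) \<notin> E"
      using i_max[of j] \<open>i < j\<close> r(4) unfolding S_def by cases auto
  qed (use \<open>i \<in> S\<close> r(3) in \<open>auto simp: S_def\<close>)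
  moreover have "length (drop i P @ [r]) \<ge> 4" "last P \<in> set (drop i P @ [r])"
    using \<open>i \<in> S\<close> last_in_set[of "drop i P"] last_drop[of i P] unfolding S_def by auto
  ultimately show thesis using that by blast
qed

lemma reduce_steps_subset: "(reduce_step E)\<^sup>*\<^sup>* N I \<Longrightarrow> I \<subseteq> N"
  by (induction rule: rtranclp_induct) (auto simp: reduce_step_def)

theorem proposition4:
  fixes N I :: "'a set" and E :: "('a \<times> 'a) set" and y :: 'a
  assumes "network N E"
    and "omega_outcome N E I"
    and "y \<in> I" and "\<exists>w \<in> I. (y, w) \<in> E"
  shows "(\<exists>C. chordless_cycle E I C \<and> length C \<ge> 4 \<and> y \<in> set C) \<or>
         (\<exists>C1 C2 x z P. chordless_cycle E I C1 \<and> length C1 \<ge> 4 \<and>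
            chordless_cycle E I C2 \<and> length C2 \<ge> 4 \<and>
            x \<in> set C1 \<and> z \<in> set C2 \<and> is_path E I P x z \<and> y \<in> set P)"
proof -
  have E: "sym E" "irrefl E" and "finite N"
    using assms(1) unfolding network_def by auto
  have irreducible: "\<nexists>y z. subsumed E I z y" and "I \<subseteq> N"
    using assms(2) reduce_steps_subset unfolding omega_outcome_def by auto
  obtain w where "w \<in> I" "(y, w) \<in> E" using assms(4) by blast
  then have yw: "induced_path E I [y, w]"
    using induced_path_edge[OF E assms(3)] by blast
  obtain P where P: "induced_path E I P" "y \<in> set P"
    and longest: "\<And>Q. induced_path E I Q \<Longrightarrow> y \<in> set Q \<Longrightarrow> length Q \<le> length P"
    using ex_longest_induced_path[OF finite_subset[OF \<open>I \<subseteq> N\<close> \<open>finite N\<close>] yw] by auto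
  have "length P \<ge> 2" using longest[OF yw] by simp
  obtain C2 where "chordless_cycle E I C2" "length C2 \<ge> 4" "last P \<in> set C2"
    using longest_induced_path_last_on_chordless_cycle[OF E irreducible P(1) \<open>length P \<ge> 2\<close> P(2) longest] .
  moreover obtain C1 where "chordless_cycle E I C1" "length C1 \<ge> 4" "last (rev P) \<in> set C1"
    by (rule longest_induced_path_last_on_chordless_cycle[OF E irreducible induced_path_rev[OF P(1)]])
      (use P(2) \<open>length P \<ge> 2\<close> longest in auto)
  moreover have "last (rev P) = hd P"
    using P(2) by (simp add: last_rev)
  moreover have "is_path E I P (hd P) (last P)"
    using induced_path_is_path[OF P(1)] P(2) by force
  ultimately show ?thesis
    using P(2) by (intro disjI2 exI[of _ C1] exI[of _ C2] exI[of _ "hd P"] exI[of _ "last P"] exI[of _ P]) simp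
qed

end
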